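(* Let $(X,\ast,u,d)$ be a finite GL-rack, let $\Delta=\alpha_1\cdots\alpha_n$ be the disjoint cycle decomposition of its diagonal map (fixed points counted as $1$-cycles), $A_i=\operatorname{supp}(\alpha_i)$, and let $B_1,\dots,B_m$ be the sets obtained by taking, for each cycle length $\ell$ occurring, the union of all $A_i$ with $|A_i|=\ell$. Then for each $1\le j\le m$, $B_j$ is closed under $\ast$, $u$ and $d$, and $(B_j,\ast|_{B_j},u|_{B_j},d|_{B_j})$ is a GL-rack.
   Context: A rack is a set $X$ with a binary operation $\ast$ such that for every $y\in X$ the map $x\mapsto x\ast y$ is a bijection of $X$ and $(x\ast y)\ast z=(x\ast z)\ast(y\ast z)$ for all $x,y,z$. A GL-rack is a quadruple $(X,\ast,u,d)$ where $(X,\ast)$ is a rack and $u,d\colon X\to X$ are maps such that for all $x,y\in X$: $u(d(x\ast x))=d(u(x\ast x))=x$; $u(x\ast y)=u(x)\ast y$ and $d(x\ast y)=d(x)\ast y$; $x\ast u(y)=x\ast d(y)=x\ast y$. The diagonal map is $\Delta(x)=x\ast x$; for a finite GL-rack it is a bijection (rack automorphism) and $\Delta=(u\circ d)^{-1}$. *)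

theory Defs
  imports Main "HOL-Combinatorics.Orbits"
begin

definition rack_on :: "'a set \<Rightarrow> ('a \<Rightarrow> 'a \<Rightarrow> 'a) \<Rightarrow> bool" where
  "rack_on X op \<longleftrightarrow>
     (\<forall>x\<in>X. \<forall>y\<in>X. op x y \<in> X) \<and>
     (\<forall>y\<in>X. bij_betw (\<lambda>x. op x y) X X) \<and>
     (\<forall>x\<in>X. \<forall>y\<in>X. \<forall>z\<in>X. op (op x y) z = op (op x z) (op y z))"

definition gl_rack :: "'a set \<Rightarrow> ('a \<Rightarrow> 'a \<Rightarrow> 'a) \<Rightarrow> ('a \<Rightarrow> 'a) \<Rightarrow> ('a \<Rightarrow> 'a) \<Rightarrow> bool" where
  "gl_rack X op u d \<longleftrightarrow>
     rack_on X op \<and>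
     (\<forall>x\<in>X. u x \<in> X) \<and> (\<forall>x\<in>X. d x \<in> X) \<and>
     (\<forall>x\<in>X. u (d (op x x)) = x \<and> d (u (op x x)) = x) \<and>
     (\<forall>x\<in>X. \<forall>y\<in>X. u (op x y) = op (u x) y \<and> d (op x y) = op (d x) y) \<and>
     (\<forall>x\<in>X. \<forall>y\<in>X. op x (u y) = op x y \<and> op x (d y) = op x y)"

definition diag :: "('a \<Rightarrow> 'a \<Rightarrow> 'a) \<Rightarrow> 'a \<Rightarrow> 'a" where
  "diag op x = op x x"

text \<open>Union of the supports of all cycles of length l of the diagonal map on X
  (fixed points are 1-cycles); the support of the cycle through x is orbit (diag op) x.\<close>
definition cycle_block :: "'a set \<Rightarrow> ('a \<Rightarrow> 'a \<Rightarrow> 'a) \<Rightarrow> nat \<Rightarrow> 'a set" where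
  "cycle_block X op l = {x\<in>X. card (orbit (diag op) x) = l}"

end

theory Submission
  imports Defs
begin

text \<open>Right translations, u and d commute with the diagonal map and are injective on a finite
  GL-rack. An injective map commuting with the diagonal map carries each of its cycles onto a cycle
  of the same length, so it maps every block of equal-length cycles into itself. Finally, the rack
  and GL-rack axioms are universal identities, and an injective self-map of a finite set is
  bijective, so a finite subset closed under the operations inherits the GL-rack structure.\<close>

lemma funpow_in_invariant:
  assumes "f \<in> S \<rightarrow> S" "x \<in> S"
  shows "(f ^^ n) x \<in> S"
  using assms by (induction n) auto

lemma orbit_subset_invariant:
  assumes "f \<in> S \<rightarrow> S" "x \<in> S"
  shows "orbit f x \<subseteq> S"
  using funpow_in_invariant[OF assms] by (auto simp: orbit_altdef)

lemma funpow_commute_on: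
  assumes "f \<in> S \<rightarrow> S" "\<And>z. z \<in> S \<Longrightarrow> g (f z) = f (g z)" "x \<in> S"
  shows "(f ^^ n) (g x) = g ((f ^^ n) x)"
  using assms funpow_in_invariant[OF assms(1,3)] by (induction n) auto

lemma orbit_commute_image:
  assumes "f \<in> S \<rightarrow> S" "\<And>z. z \<in> S \<Longrightarrow> g (f z) = f (g z)" "x \<in> S"
  shows "orbit f (g x) = g ` orbit f x"
  using funpow_commute_on[of f S g, OF assms] by (auto simp: orbit_altdef)

lemma card_orbit_commute:
  assumes "f \<in> S \<rightarrow> S" "\<And>z. z \<in> S \<Longrightarrow> g (f z) = f (g z)" "inj_on g S" "x \<in> S"
  shows "card (orbit f (g x)) = card (orbit f x)"
proof -
  have "inj_on g (orbit f x)"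
    using assms(3) orbit_subset_invariant[OF assms(1,4)] by (rule inj_on_subset)
  then show ?thesis
    by (simp add: orbit_commute_image[of f S g, OF assms(1,2,4)] card_image)
qed

lemma cycle_block_closed_commuting:
  assumes "diag op \<in> X \<rightarrow> X" "g \<in> X \<rightarrow> X" "inj_on g X"
    and "\<And>z. z \<in> X \<Longrightarrow> g (diag op z) = diag op (g z)"
    and "x \<in> cycle_block X op l"
  shows "g x \<in> cycle_block X op l"
proof -
  have "x \<in> X" using assms(5) by (simp add: cycle_block_def)
  with assms show ?thesis
    by (auto simp: cycle_block_def card_orbit_commute[of "diag op" X g])
qed

lemma rack_on_diag_closed: "rack_on X op \<Longrightarrow> diag op \<in> X \<rightarrow> X"
  by (simp add: rack_on_def diag_def)

lemma rack_on_right_translation_closed: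
  "rack_on X op \<Longrightarrow> y \<in> X \<Longrightarrow> (\<lambda>x. op x y) \<in> X \<rightarrow> X"
  by (simp add: rack_on_def)

lemma rack_on_inj_right_translation:
  "rack_on X op \<Longrightarrow> y \<in> X \<Longrightarrow> inj_on (\<lambda>x. op x y) X"
  by (simp add: rack_on_def bij_betw_def)

lemma rack_on_right_translation_commute_diag:
  "rack_on X op \<Longrightarrow> y \<in> X \<Longrightarrow> z \<in> X \<Longrightarrow> op (diag op z) y = diag op (op z y)"
  unfolding rack_on_def diag_def by blast

lemma gl_rack_rack_on: "gl_rack X op u d \<Longrightarrow> rack_on X op"
  by (simp add: gl_rack_def)

lemma gl_rack_up_closed: "gl_rack X op u d \<Longrightarrow> u \<in> X \<rightarrow> X"
  by (simp add: gl_rack_def)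

lemma gl_rack_down_closed: "gl_rack X op u d \<Longrightarrow> d \<in> X \<rightarrow> X"
  by (simp add: gl_rack_def)

lemma gl_rack_up_commute_diag:
  "gl_rack X op u d \<Longrightarrow> z \<in> X \<Longrightarrow> u (diag op z) = diag op (u z)"
  by (simp add: gl_rack_def diag_def)

lemma gl_rack_down_commute_diag:
  "gl_rack X op u d \<Longrightarrow> z \<in> X \<Longrightarrow> d (diag op z) = diag op (d z)"
  by (simp add: gl_rack_def diag_def)

lemma gl_rack_inj_on_up:
  assumes "finite X" "gl_rack X op u d"
  shows "inj_on u X"
proof (rule eq_card_imp_inj_on[OF assms(1)])
  have "u ` X = X"
  proof
    show "u ` X \<subseteq> X" using gl_rack_up_closed[OF assms(2)] by auto
    show "X \<subseteq> u ` X"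
    proof
      fix x assume "x \<in> X"
      with assms(2) have "x = u (d (op x x))" "d (op x x) \<in> X"
        by (auto simp: gl_rack_def rack_on_def)
      then show "x \<in> u ` X" by blast
    qed
  qed
  then show "card (u ` X) = card X" by simp
qed

lemma gl_rack_inj_on_down:
  assumes "finite X" "gl_rack X op u d"
  shows "inj_on d X"
proof -
  have "gl_rack X op d u" using assms(2) by (auto simp: gl_rack_def)
  then show ?thesis using gl_rack_inj_on_up[OF assms(1)] by blast
qed

lemma rack_on_subset:
  assumes "rack_on X op" "finite B" "B \<subseteq> X"
    and "\<And>x y. x \<in> B \<Longrightarrow> y \<in> B \<Longrightarrow> op x y \<in> B"
  shows "rack_on B op"
proof -
  have "bij_betw (\<lambda>x. op x y) B B" if "y \<in> B" for y
  proof -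
    have "inj_on (\<lambda>x. op x y) B"
      using rack_on_inj_right_translation[OF assms(1)] that assms(3) inj_on_subset by blast
    moreover have "(\<lambda>x. op x y) ` B \<subseteq> B" using assms(4) that by auto
    ultimately show ?thesis
      using endo_inj_surj[OF assms(2)] by (simp add: bij_betw_def)
  qed
  with assms show ?thesis unfolding rack_on_def by blast
qed

lemma gl_rack_subset:
  assumes "gl_rack X op u d" "finite B" "B \<subseteq> X"
    and "\<And>x y. x \<in> B \<Longrightarrow> y \<in> B \<Longrightarrow> op x y \<in> B"
    and "\<And>x. x \<in> B \<Longrightarrow> u x \<in> B" "\<And>x. x \<in> B \<Longrightarrow> d x \<in> B"
  shows "gl_rack B op u d"
proof -
  have "rack_on B op" using rack_on_subset[OF gl_rack_rack_on[OF assms(1)] assms(2-4)] .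
  with assms(1,3,5,6) show ?thesis unfolding gl_rack_def by (intro conjI; blast)
qed

theorem lemma3p6:
  fixes X :: "'a set" and op :: "'a \<Rightarrow> 'a \<Rightarrow> 'a" and u d :: "'a \<Rightarrow> 'a" and l :: nat
  assumes "finite X"
    and "gl_rack X op u d"
    and "cycle_block X op l \<noteq> {}"
  shows "(\<forall>x\<in>cycle_block X op l. \<forall>y\<in>cycle_block X op l. op x y \<in> cycle_block X op l)
       \<and> (\<forall>x\<in>cycle_block X op l. u x \<in> cycle_block X op l)
       \<and> (\<forall>x\<in>cycle_block X op l. d x \<in> cycle_block X op l)
       \<and> gl_rack (cycle_block X op l) op u d"
proof -
  let ?B = "cycle_block X op l"
  have rack: "rack_on X op" using assms(2) by (rule gl_rack_rack_on)
  have B_subset: "?B \<subseteq> X" by (auto simp: cycle_block_def)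
  note block_closed = cycle_block_closed_commuting[OF rack_on_diag_closed[OF rack]]
  have op_closed: "op x y \<in> ?B" if "x \<in> ?B" "y \<in> ?B" for x y
    using block_closed[of "\<lambda>z. op z y"] that B_subset
      rack_on_right_translation_closed[OF rack] rack_on_inj_right_translation[OF rack]
      rack_on_right_translation_commute_diag[OF rack]
    by blast
  have u_closed: "u x \<in> ?B" if "x \<in> ?B" for x
    using block_closed[of u] that gl_rack_inj_on_up[OF assms(1,2)]
      gl_rack_up_closed[OF assms(2)] gl_rack_up_commute_diag[OF assms(2)] B_subset
    by blast
  have d_closed: "d x \<in> ?B" if "x \<in> ?B" for x
    using block_closed[of d] that gl_rack_inj_on_down[OF assms(1,2)]
      gl_rack_down_closed[OF assms(2)] gl_rack_down_commute_diag[OF assms(2)] B_subset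
    by blast
  have "gl_rack ?B op u d"
    using gl_rack_subset[OF assms(2) finite_subset[OF B_subset assms(1)] B_subset]
      op_closed u_closed d_closed
    by blast
  with op_closed u_closed d_closed show ?thesis by blast
qed

end
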